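(* Let $n\ge2$ and consider the test $\mathcal{T}_2$ described below. For every $i\in[n]$, the polynomial $f(x)=x_i$ passes $\mathcal{T}_2$ with probability at least $1-\beta$, where $\beta=1/\log n$.
   Context: The test $\mathcal{T}_2$ takes as input a degree-2 real polynomial $f:\mathbb{R}^n\to\mathbb{R}$. Fix $\beta:=1/\log n$ and $\delta:=2^{-n}$. Generate independent bits $a_1,\dots,a_n\in\{0,1\}$ each with expected value $\beta$ and independent standard Gaussians $g_1,\dots,g_n$; set $r=(a_1g_1,\dots,a_ng_n)$. Pick $i$ uniformly from $\{1,2,\dots,(\log n)^2\}$ and set $t=n^i$; pick a uniform $b\in\{-1,1\}$ (all choices independent). Let $\omega=(1,\dots,1)\in\mathbb{R}^n$ and $y=t^3r+bt^2\delta\omega$. The test accepts (f passes) iff $\mathrm{sign}(f(y))=b$. *)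

theory Defs
  imports "HOL-Probability.Probability"
begin

definition T2_beta :: "nat \<Rightarrow> real" where
  "T2_beta n = 1 / log 2 (real n)"

definition T2_delta :: "nat \<Rightarrow> real" where
  "T2_delta n = (1/2) ^ n"

definition T2_K :: "nat \<Rightarrow> nat" where
  "T2_K n = nat \<lfloor>(log 2 (real n))\<^sup>2\<rfloor>"

text \<open>Sample space: bits a_1..a_n (Bernoulli beta), Gaussians g_1..g_n (standard normal),
  exponent i uniform on {1..K}, sign b uniform on {-1,1}; all independent.\<close>
definition T2_space :: "nat \<Rightarrow> ((nat \<Rightarrow> bool) \<times> (nat \<Rightarrow> real) \<times> nat \<times> real) measure" where
  "T2_space n =
     (PiM {1..n} (\<lambda>_. measure_pmf (bernoulli_pmf (T2_beta n))))
     \<Otimes>\<^sub>M ((PiM {1..n} (\<lambda>_. density lborel std_normal_density))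
     \<Otimes>\<^sub>M (measure_pmf (pmf_of_set {1..T2_K n})
     \<Otimes>\<^sub>M measure_pmf (pmf_of_set {-1, 1::real})))"

definition T2_point :: "nat \<Rightarrow> (nat \<Rightarrow> bool) \<Rightarrow> (nat \<Rightarrow> real) \<Rightarrow> nat \<Rightarrow> real \<Rightarrow> (nat \<Rightarrow> real)" where
  "T2_point n a g i b = (\<lambda>k. if k \<in> {1..n} then
      (real n ^ i) ^ 3 * ((if a k then 1 else 0) * g k) + b * (real n ^ i)\<^sup>2 * T2_delta n
    else 0)"

definition T2_pass_prob :: "nat \<Rightarrow> ((nat \<Rightarrow> real) \<Rightarrow> real) \<Rightarrow> real" where
  "T2_pass_prob n f = measure (T2_space n)
     {(a, g, i, b) \<in> space (T2_space n). sgn (f (T2_point n a g i b)) = b}"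

end

theory Submission imports Defs begin

text \<open>If the bit a_j is off, the j-th coordinate of the query point is b t^2 \<delta> with t^2 \<delta> > 0,
  so its sign is b whatever g and i are. Hence the coordinate polynomial x_j passes whenever
  a_j = 0, an event of probability 1 - \<beta>.\<close>

lemma measure_pair_measure_Times:
  assumes "prob_space M" "prob_space N" "A \<in> sets M" "B \<in> sets N"
  shows "measure (M \<Otimes>\<^sub>M N) (A \<times> B) = measure M A * measure N B"
proof -
  interpret pair_prob_space M N
    using assms(1,2) by (simp add: pair_prob_space_def pair_sigma_finite_def
        prob_space_imp_sigma_finite)
  show ?thesis
    using assms(3,4) by (simp add: measure_def M2.emeasure_pair_measure_Times enn2real_mult)
qed

lemma measure_PiM_Collect_single:
  assumes "\<And>i. prob_space (M i)" "j \<in> I" "A \<in> sets (M j)"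
  shows "measure (PiM I M) {x \<in> space (PiM I M). x j \<in> A} = measure (M j) A"
proof -
  interpret product_prob_space M I
    using assms(1) by (simp add: product_prob_space_def product_prob_space_axioms_def
        product_sigma_finite_def prob_space_imp_sigma_finite)
  show ?thesis
    using assms(2,3) emeasure_PiM_Collect_single[of j A]
    by (simp add: measure_def)
qed

lemma borel_measurable_measure_pmf_id: "(\<lambda>x::real. x) \<in> borel_measurable (measure_pmf q)"
  by (simp add: measurable_pmf_measure1)

lemma sgn_T2_point_unselected:
  assumes "n \<ge> 1" "j \<in> {1..n}" "\<not> a j" "b \<in> {-1, 1}"
  shows "sgn (T2_point n a g i b j) = b"
proof -
  have "T2_delta n > 0" "real n ^ i > 0"
    using assms(1) by (simp_all add: T2_delta_def)
  then show ?thesis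
    using assms(2-4) by (auto simp: T2_point_def sgn_mult)
qed

lemma T2_point_coordinate_measurable:
  assumes "j \<in> {1..n}"
  shows "(\<lambda>(a, g, i, b). T2_point n a g i b j) \<in> borel_measurable (T2_space n)"
  using assms borel_measurable_measure_pmf_id unfolding T2_point_def T2_space_def by measurable

lemma T2_pass_event_coordinate_sets:
  assumes "j \<in> {1..n}"
  shows "{(a, g, i, b) \<in> space (T2_space n). sgn (T2_point n a g i b j) = b} \<in> sets (T2_space n)"
proof -
  have "(\<lambda>(a, g, i, b). b) \<in> borel_measurable (T2_space n)"
    using borel_measurable_measure_pmf_id unfolding T2_space_def by measurable
  with T2_point_coordinate_measurable[OF assms] show ?thesis
    by (simp add: case_prod_unfold)
qed

lemma T2_measure_unselected:
  assumes "n \<ge> 2" "j \<in> {1..n}"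
  shows "measure (T2_space n) {(a, g, i, b) \<in> space (T2_space n). \<not> a j \<and> b \<in> {-1, 1}}
    = 1 - T2_beta n"
proof -
  define Ma where "Ma = PiM {1..n} (\<lambda>_. measure_pmf (bernoulli_pmf (T2_beta n)))"
  define Mg where "Mg = PiM {1..n} (\<lambda>_. density lborel std_normal_density)"
  define Mi where "Mi = measure_pmf (pmf_of_set {1..T2_K n})"
  define Mb where "Mb = measure_pmf (pmf_of_set {-1, 1::real})"
  have space: "T2_space n = Ma \<Otimes>\<^sub>M (Mg \<Otimes>\<^sub>M (Mi \<Otimes>\<^sub>M Mb))"
    unfolding T2_space_def Ma_def Mg_def Mi_def Mb_def ..
  have beta: "0 \<le> T2_beta n" "T2_beta n \<le> 1"
    using assms(1) by (auto simp: T2_beta_def)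
  have prob: "prob_space Ma" "prob_space Mg" "prob_space Mi" "prob_space Mb"
    unfolding Ma_def Mg_def Mi_def Mb_def
    by (auto intro!: prob_space_PiM prob_space_normal_density simp: prob_space_measure_pmf)
  have "{(a, g, i, b) \<in> space (T2_space n). \<not> a j \<and> b \<in> {-1, 1}}
      = {a \<in> space Ma. a j \<in> {False}} \<times> (space Mg \<times> (space Mi \<times> {-1, 1}))"
    unfolding space by (auto simp: space_pair_measure Mb_def)
  also have "measure (T2_space n) \<dots> =
      measure Ma {a \<in> space Ma. a j \<in> {False}} * (measure Mg (space Mg) *
        (measure Mi (space Mi) * measure Mb {-1, 1}))"
    unfolding space using prob assms(2)
    by (simp add: measure_pair_measure_Times prob_space_pair Ma_def Mb_def)
  also have "\<dots> = 1 - T2_beta n"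
  proof -
    have "measure Ma {a \<in> space Ma. a j \<in> {False}} = measure (bernoulli_pmf (T2_beta n)) {False}"
      unfolding Ma_def using assms(2)
      by (intro measure_PiM_Collect_single) (auto simp: prob_space_measure_pmf)
    then show ?thesis
      using prob beta by (simp add: prob_space.prob_space Mb_def measure_pmf_of_set measure_pmf_single)
  qed
  finally show ?thesis .
qed

theorem mainTheorem8:
  fixes n j :: nat
  assumes "n \<ge> 2" and "j \<in> {1..n}"
  shows "T2_pass_prob n (\<lambda>x. x j) \<ge> 1 - T2_beta n"
proof -
  interpret prob_space "T2_space n"
    unfolding T2_space_def
    by (intro prob_space_pair prob_space_PiM prob_space_normal_density)
      (auto simp: prob_space_measure_pmf)
  have "{(a, g, i, b) \<in> space (T2_space n). \<not> a j \<and> b \<in> {-1, 1}}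
      \<subseteq> {(a, g, i, b) \<in> space (T2_space n). sgn (T2_point n a g i b j) = b}"
    using assms by (auto simp: sgn_T2_point_unselected)
  then have "prob {(a, g, i, b) \<in> space (T2_space n). \<not> a j \<and> b \<in> {-1, 1}}
      \<le> prob {(a, g, i, b) \<in> space (T2_space n). sgn (T2_point n a g i b j) = b}"
    using T2_pass_event_coordinate_sets[OF assms(2)] by (rule finite_measure_mono)
  then show ?thesis
    using T2_measure_unselected[OF assms] by (simp add: T2_pass_prob_def)
qed

end
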